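(* Let $p$ be a prime. If $\{a^1,\ldots,a^n\}\subseteq \mathbb{Z}^m$ is a $p$-adic generating set for a cone, then it is a $p$-adic generating set for a subspace.
   Context: A $p$-adic rational is a number $a/p^k$ with $a,k\in\mathbb{Z}$, $k\ge0$. A finite set $S\subseteq\mathbb{Z}^m$ is a $p$-adic generating set for a cone if every integral vector in the conic hull of $S$ is a conic combination of the elements of $S$ with $p$-adic coefficients; it is a $p$-adic generating set for a subspace if every integral vector in the linear hull of $S$ is a linear combination of the elements of $S$ with $p$-adic coefficients. *)

theory Defs
  imports Main "HOL-Computational_Algebra.Primes" Complex_Main
begin

text \<open>Vectors in Z^m are modelled as functions nat => int that vanish outside {0..<m}.
  A finite family a^1..a^n is modelled as a : nat => (nat => int), indexed by i < n.\<close>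

definition padic_rational :: "nat \<Rightarrow> real \<Rightarrow> bool" where
  "padic_rational p q \<longleftrightarrow> (\<exists>(a::int) (k::nat). q = of_int a / (real p) ^ k)"

definition int_vec :: "nat \<Rightarrow> (nat \<Rightarrow> int) \<Rightarrow> bool" where
  "int_vec m x \<longleftrightarrow> (\<forall>j\<ge>m. x j = 0)"

definition is_comb :: "nat \<Rightarrow> (nat \<Rightarrow> nat \<Rightarrow> int) \<Rightarrow> (nat \<Rightarrow> real) \<Rightarrow> (nat \<Rightarrow> int) \<Rightarrow> bool" where
  "is_comb n a c x \<longleftrightarrow> (\<forall>j. real_of_int (x j) = (\<Sum>i<n. c i * real_of_int (a i j)))"

definition in_cone :: "nat \<Rightarrow> (nat \<Rightarrow> nat \<Rightarrow> int) \<Rightarrow> (nat \<Rightarrow> int) \<Rightarrow> bool" where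
  "in_cone n a x \<longleftrightarrow> (\<exists>c. (\<forall>i<n. c i \<ge> 0) \<and> is_comb n a c x)"

definition in_span :: "nat \<Rightarrow> (nat \<Rightarrow> nat \<Rightarrow> int) \<Rightarrow> (nat \<Rightarrow> int) \<Rightarrow> bool" where
  "in_span n a x \<longleftrightarrow> (\<exists>c. is_comb n a c x)"

definition padic_gen_cone :: "nat \<Rightarrow> nat \<Rightarrow> nat \<Rightarrow> (nat \<Rightarrow> nat \<Rightarrow> int) \<Rightarrow> bool" where
  "padic_gen_cone p m n a \<longleftrightarrow>
     (\<forall>x. int_vec m x \<and> in_cone n a x \<longrightarrow>
        (\<exists>c. (\<forall>i<n. c i \<ge> 0 \<and> padic_rational p (c i)) \<and> is_comb n a c x))"

definition padic_gen_subspace :: "nat \<Rightarrow> nat \<Rightarrow> nat \<Rightarrow> (nat \<Rightarrow> nat \<Rightarrow> int) \<Rightarrow> bool" where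
  "padic_gen_subspace p m n a \<longleftrightarrow>
     (\<forall>x. int_vec m x \<and> in_span n a x \<longrightarrow>
        (\<exists>c. (\<forall>i<n. padic_rational p (c i)) \<and> is_comb n a c x))"

end

theory Submission
  imports Defs
begin

text \<open>Write an integral vector \<open>x\<close> of the span as \<open>\<Sum> c\<^sub>i a\<^sup>i\<close> with real \<open>c\<^sub>i\<close> and pick an
  integer \<open>K \<ge> max |c\<^sub>i|\<close>. Then \<open>x + K \<Sum> a\<^sup>i\<close> is integral and has the nonnegative coefficients
  \<open>c\<^sub>i + K\<close>, so it lies in the cone and has a nonnegative \<open>p\<close>-adic representation \<open>\<Sum> d\<^sub>i a\<^sup>i\<close>.
  Subtracting \<open>K \<Sum> a\<^sup>i\<close> again gives \<open>x = \<Sum> (d\<^sub>i - K) a\<^sup>i\<close>, and \<open>d\<^sub>i - K\<close> is still a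
  \<open>p\<close>-adic rational.\<close>

lemma padic_rational_of_int: "padic_rational p (of_int a)"
  unfolding padic_rational_def by (rule exI[of _ a], rule exI[of _ 0]) simp

lemma padic_rational_diff:
  assumes "p > 0" "padic_rational p q" "padic_rational p r"
  shows "padic_rational p (q - r)"
proof -
  obtain a k where q: "q = of_int a / real p ^ k"
    using assms(2) unfolding padic_rational_def by blast
  obtain b l where r: "r = of_int b / real p ^ l"
    using assms(3) unfolding padic_rational_def by blast
  have "q - r = of_int (a * int p ^ l - b * int p ^ k) / real p ^ (k + l)"
    using assms(1) by (simp add: q r field_simps power_add)
  then show ?thesis unfolding padic_rational_def by blast
qed

lemma int_vec_add_mult_sum:
  assumes "int_vec m x" "\<forall>i<n. int_vec m (a i)"
  shows "int_vec m (\<lambda>j. x j + K * (\<Sum>i<n. a i j))"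
  using assms unfolding int_vec_def by simp

lemma is_comb_shift_iff:
  "is_comb n a (\<lambda>i. c i + of_int K) (\<lambda>j. x j + K * (\<Sum>i<n. a i j)) \<longleftrightarrow> is_comb n a c x"
  unfolding is_comb_def by (simp add: algebra_simps sum.distrib sum_distrib_left)

lemma exists_int_shift_nonneg:
  fixes c :: "nat \<Rightarrow> real"
  shows "\<exists>K::int. \<forall>i<n. c i + of_int K \<ge> 0"
proof (intro exI allI impI)
  fix i assume "i < n"
  then have "\<bar>c i\<bar> \<le> (\<Sum>i<n. \<bar>c i\<bar>)"
    by (intro member_le_sum) auto
  then show "c i + of_int \<lceil>\<Sum>i<n. \<bar>c i\<bar>\<rceil> \<ge> 0"
    by linarith
qed

theorem proposition3p3:
  fixes p m n :: nat and a :: "nat \<Rightarrow> nat \<Rightarrow> int"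
  assumes "prime p"
    and "\<forall>i<n. int_vec m (a i)"
    and "padic_gen_cone p m n a"
  shows "padic_gen_subspace p m n a"
  unfolding padic_gen_subspace_def
proof (intro allI impI, elim conjE)
  fix x assume "int_vec m x" "in_span n a x"
  then obtain c where c: "is_comb n a c x"
    unfolding in_span_def by blast
  obtain K :: int where K: "\<forall>i<n. c i + of_int K \<ge> 0"
    using exists_int_shift_nonneg by blast
  define z where "z = (\<lambda>j. x j + K * (\<Sum>i<n. a i j))"
  have "int_vec m z"
    unfolding z_def using \<open>int_vec m x\<close> assms(2) by (rule int_vec_add_mult_sum)
  moreover have "is_comb n a (\<lambda>i. c i + of_int K) z"
    unfolding z_def is_comb_shift_iff by (rule c)
  then have "in_cone n a z"
    unfolding in_cone_def using K by (intro exI[of _ "\<lambda>i. c i + of_int K"] conjI allI impI) auto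
  ultimately obtain d where d: "\<forall>i<n. d i \<ge> 0 \<and> padic_rational p (d i)" "is_comb n a d z"
    using assms(3) unfolding padic_gen_cone_def by blast
  have "is_comb n a (\<lambda>i. (d i - of_int K) + of_int K) z"
    using d(2) by simp
  then have "is_comb n a (\<lambda>i. d i - of_int K) x"
    unfolding z_def is_comb_shift_iff .
  moreover have "\<forall>i<n. padic_rational p (d i - of_int K)"
    using d(1) padic_rational_diff[OF prime_gt_0_nat[OF assms(1)] _ padic_rational_of_int] by simp
  ultimately show "\<exists>c. (\<forall>i<n. padic_rational p (c i)) \<and> is_comb n a c x"
    by (intro exI conjI)
qed

end
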